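(* Let $\mathcal D=(A,D)$ be a dependence alphabet, $\mathcal P=(Q,\Delta)$ a saturated trace-pushdown system, and $c,d$ configurations of $\mathcal P$ with $c\vdash^*_{\mathcal P}d$. Then there exist $m\le\mathrm{TI}(\mathcal D)$ and a sequence $\overline T=(T_1,\ldots,T_m)$ of twin classes $T_i\in\mathrm{twins}(\mathcal D)$ such that $(c,d)\in\ \Vdash_{\overline T}\circ\vdash_\varepsilon^*$.
   Context: A dependence alphabet is $\mathcal D=(A,D)$, $A$ finite, $D\subseteq A\times A$ reflexive and symmetric. $D(B)=\{c\mid\exists b\in B:(b,c)\in D\}$, $D(a)=D(\{a\})$, $D(w)=D(\text{letters of }w)$. Letters $a,b$ independent if $(a,b)\notin D$; $u\parallel v$ if every letter of $u$ is independent of every letter of $v$. $\sim$ is the least congruence on $A^*$ with $ab\sim ba$ for independent $a,b$; $\mathbb M(\mathcal D)=A^*/{\sim}$, $[w]$ the class of $w$. $\mathrm{twins}(a)=\{b\mid D(b)=D(a)\}$, $\mathrm{twins}(\mathcal D)=\{\mathrm{twins}(a)\mid a\in A\}$, $\mathrm{TI}(\mathcal D)=|\mathrm{twins}(\mathcal D)|$. A pushdown system $\mathcal P=(Q,\Delta)$, $Q$ finite, $\Delta\subseteq Q\times A\times A^*\times Q$ finite; configurations $Q\times\mathbb M(\mathcal D)$; $(p,s)\vdash_{\mathcal P}(q,t)$ iff there are $(p,a,w,q)\in\Delta$, $x\in A^*$ with $s=[ax]$, $t=[wx]$. It is a trace-pushdown system if (P1) $D(w)\subseteq D(a)$ for all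 $(p,a,w,q)\in\Delta$ and (P2') whenever $(p,a,v,q),(q,b,w,r)\in\Delta$ with $av\parallel bw$ there is $q'$ with $(p,b,w,q'),(q',a,v,r)\in\Delta$. It is saturated if $(p,a,ubv,q),(q,b,\varepsilon,r)\in\Delta$ with $b\in A$, $u,v\in A^*$, $u\parallel b$ implies $(p,a,uv,r)\in\Delta$. Let $\Delta_\varepsilon=\Delta\cap(Q\times A\times\{\varepsilon\}\times Q)$ and, for $T\in\mathrm{twins}(\mathcal D)$, $\Delta_T=\Delta\cap(Q\times T\times A^+\times Q)$; $\vdash_\varepsilon$ and $\vdash_T$ are the one-step relations of $(Q,\Delta_\varepsilon)$ and $(Q,\Delta_T)$. Relations are composed left to right ($R_1\circ R_2=\{(x,z)\mid\exists y:(x,y)\in R_1,(y,z)\in R_2\}$). Define $\Vdash_T=\vdash_\varepsilon^*\circ\vdash_T^+$ and $\Vdash_{(T_1,\ldots,T_m)}=\Vdash_{T_1}\circ\cdots\circ\Vdash_{T_m}$ (the identity relation if $m=0$). *)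

theory Defs
  imports Main
begin

definition dep_alphabet :: "'a set \<Rightarrow> ('a \<times> 'a) set \<Rightarrow> bool" where
  "dep_alphabet A D \<longleftrightarrow> finite A \<and> D \<subseteq> A \<times> A \<and> (\<forall>a\<in>A. (a, a) \<in> D) \<and> sym D"

definition Dset :: "('a \<times> 'a) set \<Rightarrow> 'a set \<Rightarrow> 'a set" where
  "Dset D B = {c. \<exists>b\<in>B. (b, c) \<in> D}"

definition indep_words :: "('a \<times> 'a) set \<Rightarrow> 'a list \<Rightarrow> 'a list \<Rightarrow> bool" where
  "indep_words D u v \<longleftrightarrow> (\<forall>a\<in>set u. \<forall>b\<in>set v. (a, b) \<notin> D)"

definition swap_rel :: "('a \<times> 'a) set \<Rightarrow> ('a list \<times> 'a list) set" where
  "swap_rel D = {(u @ [a, b] @ v, u @ [b, a] @ v) | u a b v. (a, b) \<notin> D}"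

definition trace_eq :: "('a \<times> 'a) set \<Rightarrow> ('a list \<times> 'a list) set" where
  "trace_eq D = (swap_rel D \<union> (swap_rel D)\<inverse>)\<^sup>*"

definition tr :: "('a \<times> 'a) set \<Rightarrow> 'a list \<Rightarrow> 'a list set" where
  "tr D w = {v. (w, v) \<in> trace_eq D}"

definition traces :: "'a set \<Rightarrow> ('a \<times> 'a) set \<Rightarrow> 'a list set set" where
  "traces A D = tr D ` lists A"

definition twins :: "'a set \<Rightarrow> ('a \<times> 'a) set \<Rightarrow> 'a \<Rightarrow> 'a set" where
  "twins A D a = {b \<in> A. Dset D {b} = Dset D {a}}"

definition twin_classes :: "'a set \<Rightarrow> ('a \<times> 'a) set \<Rightarrow> 'a set set" where
  "twin_classes A D = twins A D ` A"

definition TI :: "'a set \<Rightarrow> ('a \<times> 'a) set \<Rightarrow> nat" where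
  "TI A D = card (twin_classes A D)"

definition pds :: "'a set \<Rightarrow> 'q set \<Rightarrow> ('q \<times> 'a \<times> 'a list \<times> 'q) set \<Rightarrow> bool" where
  "pds A Q \<Delta> \<longleftrightarrow> finite Q \<and> finite \<Delta> \<and> \<Delta> \<subseteq> Q \<times> A \<times> lists A \<times> Q"

definition step :: "'a set \<Rightarrow> ('a \<times> 'a) set \<Rightarrow> ('q \<times> 'a \<times> 'a list \<times> 'q) set
    \<Rightarrow> (('q \<times> 'a list set) \<times> ('q \<times> 'a list set)) set" where
  "step A D \<Delta> = {((p, s), (q, t)) | p s q t. \<exists>a w x. (p, a, w, q) \<in> \<Delta> \<and> x \<in> lists A
      \<and> s = tr D (a # x) \<and> t = tr D (w @ x)}"

definition trace_pds :: "'a set \<Rightarrow> ('a \<times> 'a) set \<Rightarrow> 'q set \<Rightarrow> ('q \<times> 'a \<times> 'a list \<times> 'q) set \<Rightarrow> bool" where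
  "trace_pds A D Q \<Delta> \<longleftrightarrow> pds A Q \<Delta>
    \<and> (\<forall>p a w q. (p, a, w, q) \<in> \<Delta> \<longrightarrow> Dset D (set w) \<subseteq> Dset D {a})
    \<and> (\<forall>p a v q b w r. (p, a, v, q) \<in> \<Delta> \<and> (q, b, w, r) \<in> \<Delta> \<and> indep_words D (a # v) (b # w)
         \<longrightarrow> (\<exists>q'. (p, b, w, q') \<in> \<Delta> \<and> (q', a, v, r) \<in> \<Delta>))"

definition saturated :: "'a set \<Rightarrow> ('a \<times> 'a) set \<Rightarrow> ('q \<times> 'a \<times> 'a list \<times> 'q) set \<Rightarrow> bool" where
  "saturated A D \<Delta> \<longleftrightarrow> (\<forall>p a u b v q r. (p, a, u @ [b] @ v, q) \<in> \<Delta> \<and> (q, b, [], r) \<in> \<Delta>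
     \<and> b \<in> A \<and> u \<in> lists A \<and> v \<in> lists A \<and> indep_words D u [b] \<longrightarrow> (p, a, u @ v, r) \<in> \<Delta>)"

definition Delta_eps :: "('q \<times> 'a \<times> 'a list \<times> 'q) set \<Rightarrow> ('q \<times> 'a \<times> 'a list \<times> 'q) set" where
  "Delta_eps \<Delta> = {(p, a, w, q) \<in> \<Delta>. w = []}"

definition Delta_T :: "('q \<times> 'a \<times> 'a list \<times> 'q) set \<Rightarrow> 'a set \<Rightarrow> ('q \<times> 'a \<times> 'a list \<times> 'q) set" where
  "Delta_T \<Delta> T = {(p, a, w, q) \<in> \<Delta>. a \<in> T \<and> w \<noteq> []}"

definition VdashT :: "'a set \<Rightarrow> ('a \<times> 'a) set \<Rightarrow> ('q \<times> 'a \<times> 'a list \<times> 'q) set \<Rightarrow> 'a set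
    \<Rightarrow> (('q \<times> 'a list set) \<times> ('q \<times> 'a list set)) set" where
  "VdashT A D \<Delta> T = (step A D (Delta_eps \<Delta>))\<^sup>* O (step A D (Delta_T \<Delta> T))\<^sup>+"

fun VdashSeq :: "'a set \<Rightarrow> ('a \<times> 'a) set \<Rightarrow> ('q \<times> 'a \<times> 'a list \<times> 'q) set \<Rightarrow> 'a set list
    \<Rightarrow> (('q \<times> 'a list set) \<times> ('q \<times> 'a list set)) set" where
  "VdashSeq A D \<Delta> [] = Id"
| "VdashSeq A D \<Delta> (T # Ts) = VdashT A D \<Delta> T O VdashSeq A D \<Delta> Ts"

end

theory Submission
  imports Defs
begin

text \<open>Take a shortest run from \<open>c\<close> to \<open>d\<close> and sort its steps by kind: pops (\<open>\<epsilon>\<close>-steps) and,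
  for each twin class \<open>T\<close>, the pushing steps that read a letter of \<open>T\<close>. Proceeding from the end
  of the run, a step of kind \<open>T\<close> is moved to the right past steps of other kinds until it meets
  the first later step of kind \<open>T\<close>. Two consecutive steps either commute by (P2'), or merge into
  one step by saturation, or one of them pushes only letters \<open>z\<close> with \<open>D(z) \<subset> D(a)\<close>, where
  \<open>a\<close> is the letter read by the first step. Merging contradicts minimality, and so does the last
  case: every twin of \<open>a\<close> depends on all descendants of such a push, so it can only be read after
  they have all been popped, and then saturation absorbs these pops into the push, again
  shortening the run. The normalised run has one block of steps per twin class that occurs.\<close>

section \<open>Traces\<close>

lemma append_eq_append_Cons_cases:
  assumes "t @ r = U @ b # R"
  obtains t' where "t = U @ b # t'" "R = t' @ r"
  | U' where "U = t @ U'" "r = U' @ b # R"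
  using assms by (auto simp: append_eq_append_conv2 append_eq_Cons_conv Cons_eq_append_conv)

lemma append_Cons_Cons_eq_append_Cons_cases:
  assumes "u @ c # d # v = U @ b # R"
  obtains U' where "U = u @ c # d # U'" "v = U' @ b # R"
  | "U = u @ [c]" "b = d" "R = v"
  | "U = u" "b = c" "R = d # v"
  | u' where "u = U @ b # u'" "R = u' @ c # d # v"
  using assms by (auto simp: append_eq_append_conv2 Cons_eq_append_conv append_eq_Cons_conv)

locale symmetric_dependence =
  fixes D :: "('a \<times> 'a) set"
  assumes sym_D: "sym D"
begin

abbreviation trace_equiv :: "'a list \<Rightarrow> 'a list \<Rightarrow> bool" (infix "\<approx>" 50) where
  "u \<approx> v \<equiv> (u, v) \<in> trace_eq D"

abbreviation indep :: "'a list \<Rightarrow> 'a list \<Rightarrow> bool" (infix "\<parallel>" 50) where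
  "u \<parallel> v \<equiv> indep_words D u v"

lemma indep_sym: "u \<parallel> v \<longleftrightarrow> v \<parallel> u"
  using sym_D unfolding indep_words_def sym_def by blast

lemma trace_eq_swap_rtrancl: "trace_eq D = (swap_rel D)\<^sup>*"
proof -
  have "(swap_rel D)\<inverse> \<subseteq> swap_rel D"
    using sym_D unfolding swap_rel_def sym_def by blast
  then show ?thesis
    unfolding trace_eq_def by (simp add: sup.absorb1)
qed

lemma trace_eq_refl [simp]: "u \<approx> u"
  unfolding trace_eq_def by simp

lemma trace_eq_trans [trans]: "u \<approx> v \<Longrightarrow> v \<approx> w \<Longrightarrow> u \<approx> w"
  unfolding trace_eq_def by (rule rtrancl_trans)

lemma trace_eq_sym: "u \<approx> v \<Longrightarrow> v \<approx> u"
  unfolding trace_eq_def by (meson symD sym_Un_converse sym_rtrancl)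

lemma swap_relE:
  assumes "(u, v) \<in> swap_rel D"
  obtains x a b y where "u = x @ a # b # y" "v = x @ b # a # y" "(a, b) \<notin> D"
proof -
  from assms obtain x a b y where "u = x @ [a, b] @ y" "v = x @ [b, a] @ y" "(a, b) \<notin> D"
    unfolding swap_rel_def by blast
  then show thesis using that by simp
qed

lemma trace_eq_swap: "(a, b) \<notin> D \<Longrightarrow> x @ a # b # y \<approx> x @ b # a # y"
proof -
  assume "(a, b) \<notin> D"
  then have "(x @ [a, b] @ y, x @ [b, a] @ y) \<in> swap_rel D"
    unfolding swap_rel_def by blast
  then show ?thesis
    unfolding trace_eq_swap_rtrancl by auto
qed

lemma trace_eq_append_cong: "u \<approx> v \<Longrightarrow> x @ u @ y \<approx> x @ v @ y"
proof -
  assume "u \<approx> v"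
  then have "(u, v) \<in> (swap_rel D)\<^sup>*" by (simp add: trace_eq_swap_rtrancl)
  then show ?thesis
  proof (induction rule: rtrancl_induct)
    case (step v w)
    then obtain s a b s' where "v = s @ a # b # s'" "w = s @ b # a # s'" "(a, b) \<notin> D"
      by (auto elim: swap_relE)
    then have "x @ v @ y \<approx> x @ w @ y"
      using trace_eq_swap[of a b "x @ s" "s' @ y"] by simp
    with step.IH show ?case by (rule trace_eq_trans)
  qed simp
qed

lemma trace_eq_append: "u \<approx> v \<Longrightarrow> x \<approx> y \<Longrightarrow> u @ x \<approx> v @ y"
  using trace_eq_append_cong[of u v "[]" x] trace_eq_append_cong[of x y v "[]"] trace_eq_trans
  by simp

lemma trace_eq_set: "u \<approx> v \<Longrightarrow> set u = set v"
  unfolding trace_eq_swap_rtrancl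
proof (induction rule: rtrancl_induct)
  case (step v w)
  then show ?case by (elim swap_relE) auto
qed simp

lemma trace_eq_Nil: "u \<approx> [] \<Longrightarrow> u = []"
  by (drule trace_eq_set) simp

lemma trace_eq_lists: "u \<approx> v \<Longrightarrow> u \<in> lists A \<Longrightarrow> v \<in> lists A"
  using trace_eq_set by blast

lemma tr_eq_iff: "tr D u = tr D v \<longleftrightarrow> u \<approx> v"
proof
  assume "tr D u = tr D v"
  then show "u \<approx> v"
    unfolding tr_def by (metis mem_Collect_eq trace_eq_refl)
next
  assume "u \<approx> v"
  then show "tr D u = tr D v"
    unfolding tr_def using trace_eq_sym trace_eq_trans by blast
qed

lemma trace_eq_move_front: "U \<parallel> [b] \<Longrightarrow> U @ b # R \<approx> b # U @ R"
proof (induction U arbitrary: R rule: rev_induct)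
  case (snoc c U)
  then have "(U @ [c]) @ b # R \<approx> U @ b # c # R"
    using trace_eq_swap[of c b U R] unfolding indep_words_def by auto
  also have "U @ b # c # R \<approx> b # U @ c # R"
    using snoc unfolding indep_words_def by auto
  finally show ?case by simp
qed simp

lemma indep_commute: "u \<parallel> v \<Longrightarrow> u @ v \<approx> v @ u"
proof (induction v arbitrary: u)
  case (Cons b v)
  then have "u \<parallel> [b]" "u \<parallel> v"
    unfolding indep_words_def by auto
  then have "u @ b # v \<approx> b # u @ v"
    by (simp add: trace_eq_move_front)
  also have "b # u @ v \<approx> b # v @ u"
    using trace_eq_append_cong[OF Cons.IH[OF \<open>u \<parallel> v\<close>], of "[b]" "[]"] by simp
  finally show ?case by simp
qed simp

lemma swap_rel_movable_letter:
  assumes "(z, z') \<in> swap_rel D" "z = U @ b # R" "U \<parallel> [b]"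
  obtains U' R' where "z' = U' @ b # R'" "U' \<parallel> [b]" "U @ R \<approx> U' @ R'"
proof -
  from assms(1) obtain u c d v where swap: "z = u @ c # d # v" "z' = u @ d # c # v" "(c, d) \<notin> D"
    by (rule swap_relE)
  have "u @ c # d # v = U @ b # R" using swap(1) assms(2) by simp
  then show thesis
  proof (cases rule: append_Cons_Cons_eq_append_Cons_cases)
    case (1 U')
    have "z' = (u @ d # c # U') @ b # R" "u @ d # c # U' \<parallel> [b]"
      using swap(2) 1 assms(3) unfolding indep_words_def by auto
    moreover have "U @ R \<approx> (u @ d # c # U') @ R"
      using trace_eq_swap[OF swap(3), of u "U' @ R"] 1 by simp
    ultimately show thesis by (rule that)
  next
    case 2
    then have "u \<parallel> [b]" using assms(3) unfolding indep_words_def by simp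
    then show thesis using that[of u "c # v"] swap(2) 2 by simp
  next
    case 3
    then have "(d, b) \<notin> D" using swap(3) sym_D unfolding sym_def by blast
    then show thesis
      using that[of "U @ [d]" v] swap(2) assms(3) 3 unfolding indep_words_def by auto
  next
    case (4 u')
    have "U @ R \<approx> U @ u' @ d # c # v"
      using trace_eq_swap[OF swap(3), of "U @ u'" v] 4 by simp
    then show thesis using that[of U "u' @ d # c # v"] swap(2) assms(3) 4 by simp
  qed
qed

lemma trace_eq_Cons_split:
  assumes "b # y \<approx> z"
  obtains U R where "z = U @ b # R" "U \<parallel> [b]" "y \<approx> U @ R"
proof -
  from assms have "(b # y, z) \<in> (swap_rel D)\<^sup>*" by (simp add: trace_eq_swap_rtrancl)
  then have "\<exists>U R. z = U @ b # R \<and> U \<parallel> [b] \<and> y \<approx> U @ R"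
  proof (induction rule: rtrancl_induct)
    case base
    show ?case by (rule exI[of _ "[]"]) (simp add: indep_words_def)
  next
    case (step z z')
    then obtain U R where UR: "z = U @ b # R" "U \<parallel> [b]" "y \<approx> U @ R"
      by blast
    obtain U' R' where "z' = U' @ b # R'" "U' \<parallel> [b]" "U @ R \<approx> U' @ R'"
      using step(2) UR(1,2) by (rule swap_rel_movable_letter)
    with UR(3) show ?case by (blast intro: trace_eq_trans)
  qed
  then show thesis using that by blast
qed

lemma trace_eq_read_behind:
  assumes "v @ x \<approx> b # y" "v \<parallel> [b]" "(b, b) \<in> D"
  obtains x' where "x \<approx> b # x'" "y \<approx> v @ x'"
proof -
  obtain U R where UR: "v @ x = U @ b # R" "U \<parallel> [b]" "y \<approx> U @ R"
    using trace_eq_Cons_split[OF trace_eq_sym[OF assms(1)]] .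
  have "b \<notin> set v" using assms(2,3) unfolding indep_words_def by auto
  with UR(1) obtain U' where U': "U = v @ U'" "x = U' @ b # R"
    by (cases rule: append_eq_append_Cons_cases) auto
  then have "U' \<parallel> [b]" using UR(2) unfolding indep_words_def by auto
  then show thesis
    using that[of "U' @ R"] trace_eq_move_front U' UR(3) by simp
qed

lemma trace_eq_Cons_cancel: "(a, a) \<in> D \<Longrightarrow> a # x \<approx> a # y \<Longrightarrow> x \<approx> y"
proof -
  assume "(a, a) \<in> D" "a # x \<approx> a # y"
  then obtain U R where "a # y = U @ a # R" "U \<parallel> [a]" "x \<approx> U @ R"
    using trace_eq_Cons_split by blast
  moreover from this(1,2) \<open>(a, a) \<in> D\<close> have "U = []"
    unfolding indep_words_def by (cases U) auto
  ultimately show "x \<approx> y" by simp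
qed

end

section \<open>Runs of a trace-pushdown system\<close>

type_synonym ('q, 'a) transition = "'q \<times> 'a \<times> 'a list \<times> 'q"
type_synonym ('q, 'a) config = "'q \<times> 'a list set"

locale trace_pushdown =
  fixes A :: "'a set" and D :: "('a \<times> 'a) set"
    and Q :: "'q set" and \<Delta> :: "('q, 'a) transition set"
  assumes dep_alphabet: "dep_alphabet A D"
    and trace_pds: "trace_pds A D Q \<Delta>"
    and saturated: "saturated A D \<Delta>"
begin

sublocale symmetric_dependence D
  using dep_alphabet by unfold_locales (simp add: dep_alphabet_def)

abbreviation deps :: "'a \<Rightarrow> 'a set" where
  "deps a \<equiv> Dset D {a}"

lemma dep_refl: "a \<in> A \<Longrightarrow> (a, a) \<in> D"
  using dep_alphabet unfolding dep_alphabet_def by blast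

lemma transition_letters: "(p, a, w, q) \<in> \<Delta> \<Longrightarrow> a \<in> A \<and> w \<in> lists A"
  using trace_pds unfolding trace_pds_def pds_def by blast

lemma deps_pushed_subset: "(p, a, w, q) \<in> \<Delta> \<Longrightarrow> z \<in> set w \<Longrightarrow> deps z \<subseteq> deps a"
  using trace_pds unfolding trace_pds_def Dset_def by blast

lemma dep_pushed_imp_dep: "(p, a, w, q) \<in> \<Delta> \<Longrightarrow> z \<in> set w \<Longrightarrow> (z, y) \<in> D \<Longrightarrow> (a, y) \<in> D"
  using deps_pushed_subset unfolding Dset_def by blast

lemma pushed_indep: "(p, b, w, q) \<in> \<Delta> \<Longrightarrow> t \<parallel> [b] \<Longrightarrow> w \<parallel> t"
  using dep_pushed_imp_dep sym_D unfolding indep_words_def sym_def by fastforce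

lemma transitions_commute:
  "(p, a, v, q) \<in> \<Delta> \<Longrightarrow> (q, b, w, r) \<in> \<Delta> \<Longrightarrow> a # v \<parallel> b # w
   \<Longrightarrow> \<exists>q'. (p, b, w, q') \<in> \<Delta> \<and> (q', a, v, r) \<in> \<Delta>"
  using trace_pds unfolding trace_pds_def by blast

lemma saturated_pop:
  "(p, a, u @ b # v, q) \<in> \<Delta> \<Longrightarrow> (q, b, [], r) \<in> \<Delta> \<Longrightarrow> u \<parallel> [b] \<Longrightarrow> (p, a, u @ v, r) \<in> \<Delta>"
  using saturated[unfolded saturated_def, rule_format, of p a u b v q r]
    transition_letters[of p a "u @ b # v" q] by simp

definition fires :: "('q, 'a) transition \<Rightarrow> ('q, 'a) config \<Rightarrow> ('q, 'a) config \<Rightarrow> bool" where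
  "fires \<tau> c c' \<longleftrightarrow> \<tau> \<in> \<Delta> \<and> (c, c') \<in> step A D {\<tau>}"

lemma fires_iff:
  "fires (p, a, w, q) c c' \<longleftrightarrow>
     (p, a, w, q) \<in> \<Delta> \<and> (\<exists>x \<in> lists A. c = (p, tr D (a # x)) \<and> c' = (q, tr D (w @ x)))"
  unfolding fires_def step_def by blast

lemma firesI:
  "(p, a, w, q) \<in> \<Delta> \<Longrightarrow> x \<in> lists A \<Longrightarrow> u \<approx> a # x \<Longrightarrow> y \<approx> w @ x
   \<Longrightarrow> fires (p, a, w, q) (p, tr D u) (q, tr D y)"
  unfolding fires_iff by (simp add: tr_eq_iff) blast

lemma firesE:
  assumes "fires (p, a, w, q) (p', tr D u) c'"
  obtains x where "p' = p" "(p, a, w, q) \<in> \<Delta>" "x \<in> lists A" "u \<approx> a # x" "c' = (q, tr D (w @ x))"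
proof -
  from assms obtain x where "(p, a, w, q) \<in> \<Delta>" "x \<in> lists A" "p' = p" "tr D u = tr D (a # x)"
      "c' = (q, tr D (w @ x))"
    unfolding fires_iff by auto
  then show thesis using that by (simp add: tr_eq_iff)
qed

lemma fires_functional: "fires \<tau> c c1 \<Longrightarrow> fires \<tau> c c2 \<Longrightarrow> c1 = c2"
proof (cases \<tau>)
  case (fields p a w q)
  assume "fires \<tau> c c1" "fires \<tau> c c2"
  then obtain x y where xy: "(p, a, w, q) \<in> \<Delta>" "c = (p, tr D (a # x))" "c = (p, tr D (a # y))"
    "c1 = (q, tr D (w @ x))" "c2 = (q, tr D (w @ y))"
    unfolding fields fires_iff by blast
  from xy(2,3) have "a # x \<approx> a # y"
    using tr_eq_iff by blast
  then have "x \<approx> y"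
    using trace_eq_Cons_cancel dep_refl transition_letters[OF xy(1)] by blast
  with xy(4,5) show "c1 = c2"
    using trace_eq_append[OF trace_eq_refl, of x y w] tr_eq_iff by simp
qed

lemma step_imp_fires: "(c, c') \<in> step A D \<Delta> \<Longrightarrow> \<exists>\<tau>. fires \<tau> c c'"
  unfolding fires_def step_def by blast

lemma fires_imp_step: "fires \<tau> c c' \<Longrightarrow> \<tau> \<in> \<Delta>' \<Longrightarrow> (c, c') \<in> step A D \<Delta>'"
  unfolding fires_def step_def by blast

inductive run :: "('q, 'a) config \<Rightarrow> ('q, 'a) transition list \<Rightarrow> ('q, 'a) config \<Rightarrow> bool" where
  run_Nil: "run c [] c"
| run_Cons: "fires \<tau> c c' \<Longrightarrow> run c' \<tau>s d \<Longrightarrow> run c (\<tau> # \<tau>s) d"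

lemma run_Nil_iff [simp]: "run c [] d \<longleftrightarrow> c = d"
  by (blast elim: run.cases intro: run_Nil)

lemma run_Cons_iff: "run c (\<tau> # \<tau>s) d \<longleftrightarrow> (\<exists>c'. fires \<tau> c c' \<and> run c' \<tau>s d)"
  by (blast elim: run.cases intro: run_Cons)

lemma run_append_iff: "run c (\<tau>s @ \<sigma>s) d \<longleftrightarrow> (\<exists>c'. run c \<tau>s c' \<and> run c' \<sigma>s d)"
  by (induction \<tau>s arbitrary: c) (auto simp: run_Cons_iff)

lemma run_single_iff: "run c [\<tau>] d \<longleftrightarrow> fires \<tau> c d"
  by (metis run_Cons_iff run_Nil_iff)

lemma run_functional: "run c \<tau>s d \<Longrightarrow> run c \<tau>s d' \<Longrightarrow> d = d'"
proof (induction arbitrary: d' rule: run.induct)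
  case (run_Cons \<tau> c c' \<tau>s d)
  then show ?case
    unfolding run_Cons_iff using fires_functional by blast
qed simp

lemma run_transitions: "run c \<tau>s d \<Longrightarrow> set \<tau>s \<subseteq> \<Delta>"
  by (induction rule: run.induct) (auto simp: fires_def)

lemma rtrancl_step_imp_run: "(c, d) \<in> (step A D \<Delta>)\<^sup>* \<Longrightarrow> \<exists>\<tau>s. run c \<tau>s d"
proof (induction rule: rtrancl_induct)
  case (step d d')
  then obtain \<tau>s \<tau> where "run c \<tau>s d" "fires \<tau> d d'"
    using step_imp_fires by blast
  then have "run c (\<tau>s @ [\<tau>]) d'"
    using run_append_iff run_single_iff by blast
  then show ?case by blast
qed (auto intro: run_Nil)

lemma run_imp_trancl_step: "run c \<tau>s d \<Longrightarrow> \<tau>s \<noteq> [] \<Longrightarrow> set \<tau>s \<subseteq> \<Delta>' \<Longrightarrow> (c, d) \<in> (step A D \<Delta>')\<^sup>+"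
proof (induction rule: run.induct)
  case (run_Cons \<tau> c c' \<tau>s d)
  then have "(c, c') \<in> step A D \<Delta>'"
    using fires_imp_step by simp
  then show ?case
    using run_Cons by (cases "\<tau>s = []") (auto intro: trancl_into_trancl2)
qed simp

lemma run_imp_rtrancl_step:
  assumes "run c \<tau>s d" "set \<tau>s \<subseteq> \<Delta>'"
  shows "(c, d) \<in> (step A D \<Delta>')\<^sup>*"
proof (cases "\<tau>s = []")
  case False
  with assms show ?thesis by (blast intro: run_imp_trancl_step trancl_into_rtrancl)
qed (use assms in simp)

definition shortest_run ::
  "('q, 'a) config \<Rightarrow> ('q, 'a) transition list \<Rightarrow> ('q, 'a) config \<Rightarrow> bool" where
  "shortest_run c \<tau>s d \<longleftrightarrow> run c \<tau>s d \<and> (\<forall>\<sigma>s. run c \<sigma>s d \<longrightarrow> length \<tau>s \<le> length \<sigma>s)"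

lemma shortest_run_exists: "run c \<tau>s d \<Longrightarrow> \<exists>\<sigma>s. shortest_run c \<sigma>s d"
  unfolding shortest_run_def by (rule ex_has_least_nat)

lemma shortest_run_suffix:
  "shortest_run c (\<tau>s @ \<sigma>s) d \<Longrightarrow> run c \<tau>s c' \<Longrightarrow> run c' \<sigma>s d \<Longrightarrow> shortest_run c' \<sigma>s d"
  unfolding shortest_run_def by (metis add_le_cancel_left length_append run_append_iff)

lemma shortest_run_ConsE:
  assumes "shortest_run c (\<tau> # \<sigma>s) d"
  obtains c' where "fires \<tau> c c'" "shortest_run c' \<sigma>s d"
  using assms shortest_run_suffix[of c "[\<tau>]" \<sigma>s d]
  unfolding shortest_run_def by (auto simp: run_Cons_iff run_single_iff)

lemma shortest_run_same_length:
  "shortest_run c \<tau>s d \<Longrightarrow> run c \<sigma>s d \<Longrightarrow> length \<sigma>s = length \<tau>s \<Longrightarrow> shortest_run c \<sigma>s d"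
  unfolding shortest_run_def by simp

lemma fires_top:
  assumes "(q, b, w, q') \<in> \<Delta>" "t \<approx> b # t0" "t0 @ r \<in> lists A"
  shows "fires (q, b, w, q') (q, tr D (t @ r)) (q', tr D (w @ t0 @ r))"
  using firesI[OF assms(1,3), of "t @ r" "w @ t0 @ r"]
    trace_eq_append[OF assms(2) trace_eq_refl, of r]
  by simp

lemma fires_below:
  assumes "(q, b, w, q') \<in> \<Delta>" "t \<parallel> [b]" "r \<approx> b # r0" "t @ r0 \<in> lists A"
  shows "fires (q, b, w, q') (q, tr D (t @ r)) (q', tr D (t @ w @ r0))"
proof (rule firesI[OF assms(1,4)])
  have "t @ r \<approx> t @ b # r0"
    using trace_eq_append[OF trace_eq_refl assms(3)] .
  also have "t @ b # r0 \<approx> b # t @ r0"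
    using trace_eq_move_front[OF assms(2)] .
  finally show "t @ r \<approx> b # t @ r0" .
  have "w @ t \<approx> t @ w"
    using indep_commute[OF pushed_indep[OF assms(1,2)]] .
  from trace_eq_append[OF trace_eq_sym[OF this] trace_eq_refl, of r0]
  show "t @ w @ r0 \<approx> w @ t @ r0" by simp
qed

section \<open>Descendants of a push\<close>

text \<open>The word \<open>t\<close> collects the descendants of a push, \<open>r\<close> the rest of the stack.\<close>
inductive tracked_run ::
  "'q \<Rightarrow> 'a list \<Rightarrow> 'a list \<Rightarrow> ('q, 'a) transition list \<Rightarrow> 'q \<Rightarrow> 'a list \<Rightarrow> 'a list \<Rightarrow> bool" where
  tracked_Nil: "tracked_run q t r [] q t r"
| tracked_inside: "(q, b, w, q') \<in> \<Delta> \<Longrightarrow> t \<approx> b # t0 \<Longrightarrow> tracked_run q' (w @ t0) r \<sigma> q'' t' r'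
    \<Longrightarrow> tracked_run q t r ((q, b, w, q') # \<sigma>) q'' t' r'"
| tracked_outside: "(q, b, w, q') \<in> \<Delta> \<Longrightarrow> t \<parallel> [b] \<Longrightarrow> r \<approx> b # r0
    \<Longrightarrow> tracked_run q' t (w @ r0) \<sigma> q'' t' r' \<Longrightarrow> tracked_run q t r ((q, b, w, q') # \<sigma>) q'' t' r'"

inductive_cases tracked_run_NilE: "tracked_run q t r [] q' t' r'"

lemma tracked_run_ConsE:
  assumes "tracked_run q t r (\<tau> # \<sigma>) q' t' r'"
  obtains (inside) b w q2 t0 where "\<tau> = (q, b, w, q2)" "(q, b, w, q2) \<in> \<Delta>" "t \<approx> b # t0"
      "tracked_run q2 (w @ t0) r \<sigma> q' t' r'"
  | (outside) b w q2 r0 where "\<tau> = (q, b, w, q2)" "(q, b, w, q2) \<in> \<Delta>" "t \<parallel> [b]" "r \<approx> b # r0"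
      "tracked_run q2 t (w @ r0) \<sigma> q' t' r'"
  using assms by (cases rule: tracked_run.cases) auto

lemma tracked_run_lists:
  "tracked_run q t r \<sigma> q' t' r' \<Longrightarrow> t \<in> lists A \<Longrightarrow> r \<in> lists A \<Longrightarrow> t' \<in> lists A \<and> r' \<in> lists A"
proof (induction rule: tracked_run.induct)
  case (tracked_inside q b w q' t t0 r \<sigma> q'' t' r')
  then show ?case
    using trace_eq_lists[of t "b # t0"] transition_letters by simp
next
  case (tracked_outside q b w q' t r r0 \<sigma> q'' t' r')
  then show ?case
    using trace_eq_lists[of r "b # r0"] transition_letters by simp
qed simp

lemma tracked_run_run:
  "tracked_run q t r \<sigma> q' t' r' \<Longrightarrow> t \<in> lists A \<Longrightarrow> r \<in> lists A
   \<Longrightarrow> run (q, tr D (t @ r)) \<sigma> (q', tr D (t' @ r'))"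
proof (induction rule: tracked_run.induct)
  case (tracked_inside q b w q' t t0 r \<sigma> q'' t' r')
  then have "t0 \<in> lists A" "w \<in> lists A"
    using trace_eq_lists[of t "b # t0"] transition_letters by auto
  then have "fires (q, b, w, q') (q, tr D (t @ r)) (q', tr D ((w @ t0) @ r))"
    using fires_top tracked_inside by simp
  moreover have "run (q', tr D ((w @ t0) @ r)) \<sigma> (q'', tr D (t' @ r'))"
    using tracked_inside \<open>t0 \<in> lists A\<close> \<open>w \<in> lists A\<close> by simp
  ultimately show ?case by (rule run_Cons)
next
  case (tracked_outside q b w q' t r r0 \<sigma> q'' t' r')
  then have "r0 \<in> lists A" "w \<in> lists A"
    using trace_eq_lists[of r "b # r0"] transition_letters by auto
  then have "fires (q, b, w, q') (q, tr D (t @ r)) (q', tr D (t @ w @ r0))"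
    using fires_below tracked_outside by simp
  moreover have "run (q', tr D (t @ w @ r0)) \<sigma> (q'', tr D (t' @ r'))"
    using tracked_outside \<open>r0 \<in> lists A\<close> \<open>w \<in> lists A\<close> by simp
  ultimately show ?case by (rule run_Cons)
qed simp

lemma run_tracked_run:
  "run (q, tr D (t @ r)) \<sigma> d \<Longrightarrow> t \<in> lists A \<Longrightarrow> r \<in> lists A
   \<Longrightarrow> \<exists>q' t' r'. tracked_run q t r \<sigma> q' t' r' \<and> d = (q', tr D (t' @ r'))"
proof (induction \<sigma> arbitrary: q t r)
  case Nil
  then show ?case by (auto intro: tracked_Nil)
next
  case (Cons \<tau> \<sigma>)
  obtain p b w q2 where \<tau>: "\<tau> = (p, b, w, q2)" by (cases \<tau>)
  from Cons.prems(1) obtain c' where step: "fires \<tau> (q, tr D (t @ r)) c'" and rest: "run c' \<sigma> d"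
    unfolding run_Cons_iff by blast
  from step obtain x where x: "p = q" "(q, b, w, q2) \<in> \<Delta>" "t @ r \<approx> b # x" "c' = (q2, tr D (w @ x))"
    unfolding \<tau> by (elim firesE) auto
  have w: "w \<in> lists A" using transition_letters[OF x(2)] by simp
  obtain U R where UR: "t @ r = U @ b # R" "U \<parallel> [b]" "x \<approx> U @ R"
    using trace_eq_Cons_split[OF trace_eq_sym[OF x(3)]] .
  have wx: "w @ x \<approx> w @ U @ R" using trace_eq_append[OF trace_eq_refl UR(3)] .
  from UR(1) show ?case
  proof (cases rule: append_eq_append_Cons_cases)
    case (1 t')
    have "t \<approx> b # U @ t'" using trace_eq_move_front[OF UR(2)] 1 by simp
    moreover have "c' = (q2, tr D ((w @ U @ t') @ r))"
      using x(4) wx 1 tr_eq_iff by simp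
    moreover have "w @ U @ t' \<in> lists A" using w Cons.prems 1 by simp
    ultimately show ?thesis
      using Cons.IH[of q2 "w @ U @ t'" r] rest Cons.prems(3) x(2) \<tau> x(1)
      by (blast intro: tracked_inside)
  next
    case (2 U')
    then have "t \<parallel> [b]" "U' \<parallel> [b]" using UR(2) unfolding indep_words_def by auto
    have "r \<approx> b # U' @ R" using trace_eq_move_front[OF \<open>U' \<parallel> [b]\<close>] 2 by simp
    have "w @ t \<approx> t @ w" using indep_commute[OF pushed_indep[OF x(2) \<open>t \<parallel> [b]\<close>]] .
    then have "w @ x \<approx> t @ w @ U' @ R"
      using trace_eq_trans[OF wx] trace_eq_append[OF _ trace_eq_refl, of "w @ t" "t @ w" "U' @ R"] 2
      by simp
    then have "c' = (q2, tr D (t @ w @ U' @ R))"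
      using x(4) tr_eq_iff by simp
    moreover have "w @ U' @ R \<in> lists A" using w Cons.prems 2 by simp
    ultimately show ?thesis
      using Cons.IH[of q2 t "w @ U' @ R"] rest Cons.prems(2) x(2) \<tau> x(1) \<open>t \<parallel> [b]\<close> \<open>r \<approx> b # U' @ R\<close>
      by (blast intro: tracked_outside)
  qed
qed

lemma tracked_run_trace_eq:
  "tracked_run q t r \<sigma> q' t' r' \<Longrightarrow> t \<approx> u \<Longrightarrow> \<exists>u'. tracked_run q u r \<sigma> q' u' r' \<and> u' \<approx> t'"
proof (induction arbitrary: u rule: tracked_run.induct)
  case (tracked_Nil q t r)
  then show ?case by (blast intro: tracked_run.tracked_Nil trace_eq_sym)
next
  case (tracked_inside q b w q' t t0 r \<sigma> q'' t' r')
  have "u \<approx> b # t0"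
    using trace_eq_trans[OF trace_eq_sym[OF tracked_inside.prems] tracked_inside.hyps(2)] .
  with tracked_inside.hyps show ?case by (blast intro: tracked_run.tracked_inside trace_eq_refl)
next
  case (tracked_outside q b w q' t r r0 \<sigma> q'' t' r')
  then have "u \<parallel> [b]" using trace_eq_set unfolding indep_words_def by blast
  with tracked_outside show ?case by (blast intro: tracked_run.tracked_outside)
qed

lemma tracked_run_letters:
  assumes "tracked_run q t r \<sigma> q' t' r'" "set t \<subseteq> S"
    and "\<And>p b w p'. (p, b, w, p') \<in> \<Delta> \<Longrightarrow> b \<in> S \<Longrightarrow> set w \<subseteq> S"
  shows "set t' \<subseteq> S"
  using assms(1,2)
proof (induction rule: tracked_run.induct)
  case (tracked_inside q b w q' t t0 r \<sigma> q'' t' r')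
  then have "set t = insert b (set t0)" using trace_eq_set by fastforce
  with tracked_inside assms(3) show ?case by simp
qed simp_all

inductive run_below :: "'a list \<Rightarrow> 'q \<Rightarrow> 'a list \<Rightarrow> ('q, 'a) transition list \<Rightarrow> 'q \<Rightarrow> 'a list \<Rightarrow> bool"
  for m where
  below_Nil: "run_below m q z [] q z"
| below_Cons: "(q, c, w, q') \<in> \<Delta> \<Longrightarrow> m \<parallel> [c] \<Longrightarrow> z \<approx> c # z0 \<Longrightarrow> run_below m q' (w @ z0) \<pi> q'' z'
    \<Longrightarrow> run_below m q z ((q, c, w, q') # \<pi>) q'' z'"

lemma run_below_run:
  "run_below m q z \<pi> q' z' \<Longrightarrow> m \<in> lists A \<Longrightarrow> z \<in> lists A
   \<Longrightarrow> run (q, tr D (m @ z)) \<pi> (q', tr D (m @ z'))"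
proof (induction rule: run_below.induct)
  case (below_Cons q c w q' z z0 \<pi> q'' z')
  then have "z0 \<in> lists A" "w \<in> lists A"
    using trace_eq_lists[of z "c # z0"] transition_letters by auto
  then have "fires (q, c, w, q') (q, tr D (m @ z)) (q', tr D (m @ w @ z0))"
    using fires_below below_Cons by simp
  moreover have "run (q', tr D (m @ w @ z0)) \<pi> (q'', tr D (m @ z'))"
    using below_Cons \<open>z0 \<in> lists A\<close> \<open>w \<in> lists A\<close> by simp
  ultimately show ?case by (rule run_Cons)
qed simp

lemma run_below_snoc:
  "run_below m q z \<pi> q' z' \<Longrightarrow> (q', c, w, q'') \<in> \<Delta> \<Longrightarrow> m \<parallel> [c] \<Longrightarrow> z' \<approx> c # z0
   \<Longrightarrow> run_below m q z (\<pi> @ [(q', c, w, q'')]) q'' (w @ z0)"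
  by (induction rule: run_below.induct) (auto intro: run_below.intros)

lemma run_below_mono: "run_below m q z \<pi> q' z' \<Longrightarrow> set m' \<subseteq> set m \<Longrightarrow> run_below m' q z \<pi> q' z'"
proof (induction rule: run_below.induct)
  case (below_Cons q c w q' z z0 \<pi> q'' z')
  then have "m' \<parallel> [c]" unfolding indep_words_def by blast
  with below_Cons show ?case by (blast intro: run_below.below_Cons)
qed (rule below_Nil)

text \<open>A pop of a letter of \<open>m\<close> at the end of a run below \<open>m\<close> commutes to its front by (P2'): the
  letters read below \<open>m\<close>, and by (P1) also the letters they push, are independent of it.\<close>
lemma run_below_pop_to_front:
  "run_below m q z \<pi> q' z' \<Longrightarrow> (q', b, [], q'') \<in> \<Delta> \<Longrightarrow> b \<in> set m
   \<Longrightarrow> \<exists>q1 \<pi>'. (q, b, [], q1) \<in> \<Delta> \<and> run_below m q1 z \<pi>' q'' z' \<and> length \<pi>' = length \<pi>"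
proof (induction rule: run_below.induct)
  case (below_Nil q z)
  then show ?case by (blast intro: run_below.below_Nil)
next
  case (below_Cons q c w q1 z z0 \<pi> q' z')
  obtain q2 \<pi>' where pop: "(q1, b, [], q2) \<in> \<Delta>" and
    rest: "run_below m q2 (w @ z0) \<pi>' q'' z'" "length \<pi>' = length \<pi>"
    using below_Cons.IH[OF below_Cons.prems] by blast
  have "(b, c) \<notin> D"
    using below_Cons.hyps(2) below_Cons.prems(2) unfolding indep_words_def by simp
  then have "(c, b) \<notin> D"
    using sym_D by (blast dest: symD)
  then have "c # w \<parallel> [b]"
    unfolding indep_words_def by (auto dest: dep_pushed_imp_dep[OF below_Cons.hyps(1)])
  then obtain q3 where "(q, b, [], q3) \<in> \<Delta>" "(q3, c, w, q2) \<in> \<Delta>"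
    using transitions_commute[OF below_Cons.hyps(1) pop] by blast
  moreover from this(2) have "run_below m q3 z ((q3, c, w, q2) # \<pi>') q'' z'"
    using below_Cons.hyps(2,3) rest(1) by (rule run_below.below_Cons)
  ultimately show ?case using rest(2) by fastforce
qed

lemma push_absorbs_pop:
  assumes "(p, a, U @ b # m, q) \<in> \<Delta>" "run_below (U @ b # m) q z \<pi> q' z'" "(q', b, [], q'') \<in> \<Delta>"
    and "U \<parallel> [b]"
  obtains q1 \<pi>' where "(p, a, U @ m, q1) \<in> \<Delta>" "run_below (U @ m) q1 z \<pi>' q'' z'"
    "length \<pi>' = length \<pi>"
proof -
  obtain q1 \<pi>' where "(q, b, [], q1) \<in> \<Delta>" "run_below (U @ b # m) q1 z \<pi>' q'' z'"
    "length \<pi>' = length \<pi>"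
    using run_below_pop_to_front[OF assms(2,3)] by auto
  moreover from this(1) have "(p, a, U @ m, q1) \<in> \<Delta>"
    using saturated_pop assms(1,4) by blast
  ultimately show thesis
    using that run_below_mono[of "U @ b # m" q1 z \<pi>' q'' z' "U @ m"] by auto
qed

section \<open>Vanishing pushes\<close>

text \<open>\<open>pending_push c n q m t r\<close>: some run from \<open>c\<close> reaches \<open>(q, [m t r])\<close> in at most \<open>n + 1\<close>
  steps, one of which pushed \<open>m\<close> while no later one touched \<open>m\<close>.\<close>
definition pending_push ::
  "('q, 'a) config \<Rightarrow> nat \<Rightarrow> 'q \<Rightarrow> 'a list \<Rightarrow> 'a list \<Rightarrow> 'a list \<Rightarrow> bool" where
  "pending_push c n q m t r \<longleftrightarrow> m \<noteq> [] \<and> t \<in> lists A \<and> r \<in> lists A \<and>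
     (\<exists>\<tau>s p a x q1 \<pi> z. run c \<tau>s (p, tr D (a # x)) \<and> x \<in> lists A \<and> (p, a, m, q1) \<in> \<Delta> \<and>
        run_below m q1 x \<pi> q z \<and> z \<approx> t @ r \<and> length \<tau>s + length \<pi> \<le> n)"

lemma pending_pushI:
  "m \<noteq> [] \<Longrightarrow> t \<in> lists A \<Longrightarrow> r \<in> lists A \<Longrightarrow> run c \<tau>s (p, tr D (a # x)) \<Longrightarrow> x \<in> lists A
   \<Longrightarrow> (p, a, m, q1) \<in> \<Delta> \<Longrightarrow> run_below m q1 x \<pi> q z \<Longrightarrow> z \<approx> t @ r \<Longrightarrow> length \<tau>s + length \<pi> \<le> n
   \<Longrightarrow> pending_push c n q m t r"
  unfolding pending_push_def by blast

lemma pending_pushE: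
  assumes "pending_push c n q m t r"
  obtains \<tau>s p a x q1 \<pi> z where "m \<noteq> []" "t \<in> lists A" "r \<in> lists A" "run c \<tau>s (p, tr D (a # x))"
    "x \<in> lists A" "(p, a, m, q1) \<in> \<Delta>" "run_below m q1 x \<pi> q z" "z \<approx> t @ r"
    "length \<tau>s + length \<pi> \<le> n"
  using assms unfolding pending_push_def by blast

lemma pending_push_lists:
  "pending_push c n q m t r \<Longrightarrow> m \<noteq> [] \<and> m \<in> lists A \<and> t \<in> lists A \<and> r \<in> lists A"
  by (elim pending_pushE) (use transition_letters in blast)

lemma pending_push_mono: "pending_push c n q m t r \<Longrightarrow> n \<le> n' \<Longrightarrow> pending_push c n' q m t r"
  by (elim pending_pushE, rule pending_pushI) (assumption | simp)+

lemma pending_push_start: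
  "(p, a, m, q) \<in> \<Delta> \<Longrightarrow> m \<noteq> [] \<Longrightarrow> x \<in> lists A \<Longrightarrow> pending_push (p, tr D (a # x)) 0 q m [] x"
  by (rule pending_pushI[where \<tau>s = "[]" and \<pi> = "[]"]) (auto intro: below_Nil)

lemma pending_push_step_below:
  assumes "pending_push c n q m t r" "(q, b, w, q2) \<in> \<Delta>" "m \<parallel> [b]" "t @ r \<approx> b # z0"
    and "w @ z0 \<approx> t' @ r'" "t' \<in> lists A" "r' \<in> lists A"
  shows "pending_push c (Suc n) q2 m t' r'"
  using assms(1)
proof (rule pending_pushE)
  fix \<tau>s p a x q1 \<pi> z
  assume pp: "m \<noteq> []" "run c \<tau>s (p, tr D (a # x))" "x \<in> lists A" "(p, a, m, q1) \<in> \<Delta>"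
    "run_below m q1 x \<pi> q z" "z \<approx> t @ r" "length \<tau>s + length \<pi> \<le> n"
  have "run_below m q1 x (\<pi> @ [(q, b, w, q2)]) q2 (w @ z0)"
    using run_below_snoc[OF pp(5) assms(2,3) trace_eq_trans[OF pp(6) assms(4)]] .
  with pp(7) have "length \<tau>s + length (\<pi> @ [(q, b, w, q2)]) \<le> Suc n" by simp
  with pp(1-4) assms(5-7) \<open>run_below m q1 x (\<pi> @ [(q, b, w, q2)]) q2 (w @ z0)\<close> show ?thesis
    by (blast intro: pending_pushI)
qed

lemma pending_push_pop:
  assumes "pending_push c n q (U @ b # m) t r" "(q, b, [], q2) \<in> \<Delta>" "U \<parallel> [b]" "U @ m \<noteq> []"
  shows "pending_push c n q2 (U @ m) t r"
  using assms(1)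
proof (rule pending_pushE)
  fix \<tau>s p a x q1 \<pi> z
  assume pp: "t \<in> lists A" "r \<in> lists A" "run c \<tau>s (p, tr D (a # x))" "x \<in> lists A"
    "(p, a, U @ b # m, q1) \<in> \<Delta>" "run_below (U @ b # m) q1 x \<pi> q z" "z \<approx> t @ r"
    "length \<tau>s + length \<pi> \<le> n"
  obtain q1' \<pi>' where "(p, a, U @ m, q1') \<in> \<Delta>" "run_below (U @ m) q1' x \<pi>' q2 z"
    "length \<pi>' = length \<pi>"
    using push_absorbs_pop[OF pp(5,6) assms(2,3)] .
  with pp(8) have "length \<tau>s + length \<pi>' \<le> n" by simp
  with assms(4) pp(1-4,7) \<open>(p, a, U @ m, q1') \<in> \<Delta>\<close> \<open>run_below (U @ m) q1' x \<pi>' q2 z\<close> show ?thesis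
    by (blast intro: pending_pushI)
qed

lemma pending_push_pop_last:
  assumes "pending_push c n q [b] t r" "(q, b, [], q2) \<in> \<Delta>"
  shows "\<exists>\<tau>s. run c \<tau>s (q2, tr D (t @ r)) \<and> length \<tau>s \<le> Suc n"
  using assms(1)
proof (rule pending_pushE)
  fix \<tau>s p a x q1 \<pi> z
  assume pp: "run c \<tau>s (p, tr D (a # x))" "x \<in> lists A" "(p, a, [b], q1) \<in> \<Delta>"
    "run_below [b] q1 x \<pi> q z" "z \<approx> t @ r" "length \<tau>s + length \<pi> \<le> n"
  obtain q1' \<pi>' where absorbed: "(p, a, [], q1') \<in> \<Delta>" "run_below [] q1' x \<pi>' q2 z"
    "length \<pi>' = length \<pi>"
    using push_absorbs_pop[of p a "[]" b "[]" q1 x \<pi> q z q2] pp(3,4) assms(2)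
    by (auto simp: indep_words_def)
  have "fires (p, a, [], q1') (p, tr D (a # x)) (q1', tr D x)"
    using firesI[OF absorbed(1) pp(2)] by simp
  moreover have "tr D z = tr D (t @ r)" using pp(5) tr_eq_iff by simp
  then have "run (q1', tr D x) \<pi>' (q2, tr D (t @ r))"
    using run_below_run[OF absorbed(2) _ pp(2)] by simp
  ultimately have "run c (\<tau>s @ (p, a, [], q1') # \<pi>') (q2, tr D (t @ r))"
    using pp(1) by (auto simp: run_append_iff intro: run_Cons)
  with pp(6) absorbed(3) show ?thesis by force
qed

lemma pending_push_push:
  assumes "pending_push c n q (U @ b # m) t r" "(q, b, w, q2) \<in> \<Delta>" "U \<parallel> [b]" "w \<noteq> []"
  shows "pending_push c (Suc n) q2 w (U @ m @ t) r"
  using assms(1)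
proof (rule pending_pushE)
  fix \<tau>s p a x q1 \<pi> z
  assume pp: "t \<in> lists A" "r \<in> lists A" "run c \<tau>s (p, tr D (a # x))" "x \<in> lists A"
    "(p, a, U @ b # m, q1) \<in> \<Delta>" "run_below (U @ b # m) q1 x \<pi> q z" "z \<approx> t @ r"
    "length \<tau>s + length \<pi> \<le> n"
  have pushed: "U @ b # m \<in> lists A" using transition_letters[OF pp(5)] by simp
  have z: "z \<in> lists A" using trace_eq_lists[OF trace_eq_sym[OF pp(7)]] pp(1,2) by simp
  have "fires (p, a, U @ b # m, q1) (p, tr D (a # x)) (q1, tr D ((U @ b # m) @ x))"
    using firesI[OF pp(5,4)] by simp
  with pp(3) run_below_run[OF pp(6) pushed pp(4)]
  have "run c (\<tau>s @ (p, a, U @ b # m, q1) # \<pi>) (q, tr D ((U @ b # m) @ z))"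
    by (auto simp: run_append_iff intro: run_Cons)
  moreover have "tr D ((U @ b # m) @ z) = tr D (b # U @ m @ z)"
    using trace_eq_move_front[OF assms(3)] tr_eq_iff by simp
  ultimately have "run c (\<tau>s @ (p, a, U @ b # m, q1) # \<pi>) (q, tr D (b # U @ m @ z))"
    by simp
  moreover have "U @ m @ z \<approx> (U @ m @ t) @ r"
    using trace_eq_append[OF trace_eq_refl pp(7), of "U @ m"] by simp
  moreover have "U @ m @ t \<in> lists A" "U @ m @ z \<in> lists A" using pushed z pp(1) by auto
  ultimately show ?thesis
    using pending_pushI[OF assms(4) _ pp(2) _ _ assms(2) below_Nil] pp(8) by simp
qed

lemma pending_push_read_pushed:
  assumes "pending_push c n q (U @ b # m) t r" "(q, b, w, q2) \<in> \<Delta>" "U \<parallel> [b]"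
    and "tracked_run q2 (w @ t0) r \<sigma> q' [] r'" "t0 \<approx> U @ m @ t"
  shows "(\<exists>q2 m' t' r2. pending_push c (Suc n) q2 m' t' r2 \<and> tracked_run q2 (m' @ t') r2 \<sigma> q' [] r')
    \<or> (\<exists>\<tau>s. run c \<tau>s (q', tr D r') \<and> length \<tau>s \<le> Suc n + length \<sigma>)"
proof (cases "w = []")
  case True
  have "tracked_run q2 t0 r \<sigma> q' [] r'" using assms(4) True by simp
  then obtain u where u: "tracked_run q2 (U @ m @ t) r \<sigma> q' u r'" "u \<approx> []"
    using tracked_run_trace_eq assms(5) by blast
  from u(2) have "u = []" by (rule trace_eq_Nil)
  with u(1) have popped: "tracked_run q2 ((U @ m) @ t) r \<sigma> q' [] r'" by simp
  have pop: "(q, b, [], q2) \<in> \<Delta>" using assms(2) True by simp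
  show ?thesis
  proof (cases "U @ m = []")
    case True
    then have "\<exists>\<tau>s. run c \<tau>s (q2, tr D (t @ r)) \<and> length \<tau>s \<le> Suc n"
      using pending_push_pop_last[of c n q b t r q2] assms(1) pop by simp
    then obtain \<tau>s where "run c \<tau>s (q2, tr D (t @ r))" "length \<tau>s \<le> Suc n"
      by blast
    moreover have "run (q2, tr D (t @ r)) \<sigma> (q', tr D r')"
      using tracked_run_run[OF popped] pending_push_lists[OF assms(1)] True by simp
    ultimately have "run c (\<tau>s @ \<sigma>) (q', tr D r')" "length (\<tau>s @ \<sigma>) \<le> Suc n + length \<sigma>"
      using run_append_iff by auto
    then show ?thesis by blast
  next
    case False
    then have "pending_push c n q2 (U @ m) t r"
      using pending_push_pop[OF assms(1) pop assms(3)] by simp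
    then have "pending_push c (Suc n) q2 (U @ m) t r"
      by (rule pending_push_mono) simp
    with popped show ?thesis by blast
  qed
next
  case False
  have "tracked_run q2 (w @ U @ m @ t) r \<sigma> q' [] r'"
    using tracked_run_trace_eq[OF assms(4) trace_eq_append[OF trace_eq_refl assms(5)]] trace_eq_Nil
    by blast
  then show ?thesis
    using pending_push_push[OF assms(1-3) False] by blast
qed

lemma pending_push_read_tracked:
  assumes "pending_push c n q m (U @ b # R) r" "(q, b, w, q2) \<in> \<Delta>" "m @ U \<parallel> [b]"
  shows "pending_push c (Suc n) q2 m (w @ U @ R) r"
proof -
  have "m \<parallel> [b]" "U \<parallel> [b]" using assms(3) unfolding indep_words_def by auto
  have "(U @ b # R) @ r \<approx> b # U @ R @ r"
    using trace_eq_move_front[OF \<open>U \<parallel> [b]\<close>] by simp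
  moreover have "w @ U @ R \<in> lists A"
    using pending_push_lists[OF assms(1)] transition_letters[OF assms(2)] by auto
  ultimately show ?thesis
    using pending_push_step_below[OF assms(1,2) \<open>m \<parallel> [b]\<close>] pending_push_lists[OF assms(1)] by simp
qed

lemma pending_push_read_outside:
  assumes "pending_push c n q m t r" "(q, b, w, q2) \<in> \<Delta>" "m @ t \<parallel> [b]" "r \<approx> b # r0"
  shows "pending_push c (Suc n) q2 m t (w @ r0)"
proof -
  have "m \<parallel> [b]" "t \<parallel> [b]" using assms(3) unfolding indep_words_def by auto
  have "t @ r \<approx> b # t @ r0"
    using trace_eq_trans[OF trace_eq_append[OF trace_eq_refl assms(4)]
        trace_eq_move_front[OF \<open>t \<parallel> [b]\<close>]] .
  moreover have "w @ t @ r0 \<approx> t @ w @ r0"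
    using trace_eq_append[OF indep_commute[OF pushed_indep[OF assms(2) \<open>t \<parallel> [b]\<close>]]
        trace_eq_refl, of r0] by simp
  moreover have "t \<in> lists A" "w @ r0 \<in> lists A"
    using pending_push_lists[OF assms(1)] transition_letters[OF assms(2)]
      trace_eq_lists[OF assms(4)] by auto
  ultimately show ?thesis
    using pending_push_step_below[OF assms(1,2) \<open>m \<parallel> [b]\<close>] by blast
qed

lemma pending_push_tracked_step:
  assumes "pending_push c n q m t r" "tracked_run q (m @ t) r (h # \<sigma>) q' [] r'"
  shows "(\<exists>q2 m' t' r2. pending_push c (Suc n) q2 m' t' r2 \<and> tracked_run q2 (m' @ t') r2 \<sigma> q' [] r')
    \<or> (\<exists>\<tau>s. run c \<tau>s (q', tr D r') \<and> length \<tau>s \<le> Suc n + length \<sigma>)"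
  using assms(2)
proof (cases rule: tracked_run_ConsE)
  case (inside b w q2 t0)
  obtain U R where UR: "m @ t = U @ b # R" "U \<parallel> [b]" "t0 \<approx> U @ R"
    using trace_eq_Cons_split[OF trace_eq_sym[OF inside(3)]] .
  from UR(1) show ?thesis
  proof (cases rule: append_eq_append_Cons_cases)
    case (1 m')
    have "pending_push c n q (U @ b # m') t r" "t0 \<approx> U @ m' @ t"
      using assms(1) UR(3) 1 by simp_all
    then show ?thesis
      using pending_push_read_pushed inside(2,4) UR(2) by blast
  next
    case (2 U')
    have "pending_push c (Suc n) q2 m (w @ U' @ R) r"
      using pending_push_read_tracked assms(1) inside(2) UR(2) 2 by simp
    moreover have "m \<parallel> [b]" using UR(2) 2 unfolding indep_words_def by simp
    then have "(w @ m) @ U' @ R \<approx> (m @ w) @ U' @ R"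
      using trace_eq_append[OF indep_commute[OF pushed_indep[OF inside(2)]] trace_eq_refl] by blast
    then have "w @ t0 \<approx> m @ w @ U' @ R"
      using trace_eq_trans[OF trace_eq_append[OF trace_eq_refl UR(3), of w]] 2 by simp
    ultimately show ?thesis
      using tracked_run_trace_eq[OF inside(4)] trace_eq_Nil by blast
  qed
next
  case (outside b w q2 r0)
  then show ?thesis
    using pending_push_read_outside[OF assms(1)] by blast
qed

text \<open>If everything the pending push wrote is eventually popped, the run gets a step shorter:
  saturation absorbs these pops into the push.\<close>
lemma pending_push_vanishing:
  "tracked_run q (m @ t) r \<sigma> q' [] r' \<Longrightarrow> pending_push c n q m t r
   \<Longrightarrow> \<exists>\<tau>s. run c \<tau>s (q', tr D r') \<and> length \<tau>s \<le> n + length \<sigma>"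
proof (induction \<sigma> arbitrary: n q m t r)
  case Nil
  then show ?case by (auto elim: tracked_run_NilE dest: pending_push_lists)
next
  case (Cons h \<sigma>)
  from pending_push_tracked_step[OF Cons.prems(2,1)] show ?case
  proof (elim disjE exE conjE)
    fix q2 m' t' r2
    assume "pending_push c (Suc n) q2 m' t' r2" "tracked_run q2 (m' @ t') r2 \<sigma> q' [] r'"
    then show ?thesis using Cons.IH by fastforce
  qed auto
qed

lemma shortest_run_push_persists:
  assumes "shortest_run (p, tr D (a # x)) ((p, a, m, q) # \<sigma> @ \<sigma>') d" "m \<noteq> []" "x \<in> lists A"
    and "tracked_run q m x \<sigma> q' t' r'"
  shows "t' \<noteq> []"
proof
  assume "t' = []"
  have run: "run (p, tr D (a # x)) ((p, a, m, q) # \<sigma> @ \<sigma>') d"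
    using assms(1) unfolding shortest_run_def by blast
  have push: "(p, a, m, q) \<in> \<Delta>"
    using run_transitions[OF run] by simp
  then have "m \<in> lists A"
    using transition_letters by blast
  obtain \<tau>s where shortcut: "run (p, tr D (a # x)) \<tau>s (q', tr D r')" "length \<tau>s \<le> length \<sigma>"
    using pending_push_vanishing[OF _ pending_push_start[OF push assms(2,3)]] assms(4) \<open>t' = []\<close>
    by fastforce
  have "fires (p, a, m, q) (p, tr D (a # x)) (q, tr D (m @ x))"
    using firesI[OF push assms(3)] by simp
  with run have "run (q, tr D (m @ x)) (\<sigma> @ \<sigma>') d"
    unfolding run_Cons_iff using fires_functional by blast
  then have "run (q', tr D r') \<sigma>' d"
    using tracked_run_run[OF assms(4) \<open>m \<in> lists A\<close> assms(3)] \<open>t' = []\<close> run_functional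
    unfolding run_append_iff by fastforce
  with shortcut have "run (p, tr D (a # x)) (\<tau>s @ \<sigma>') d"
    using run_append_iff by blast
  with shortcut(2) assms(1) show False
    unfolding shortest_run_def by fastforce
qed

lemma lower_prefix_blocks_twin:
  assumes "t @ r \<approx> e # y" "t \<noteq> []" "t \<in> lists A" "\<forall>z \<in> set t. deps z \<subset> deps a"
  shows "deps e \<noteq> deps a"
proof
  assume twin: "deps e = deps a"
  obtain U R where UR: "t @ r = U @ e # R" "U \<parallel> [e]"
    using trace_eq_Cons_split[OF trace_eq_sym[OF assms(1)]] by metis
  from UR(1) show False
  proof (cases rule: append_eq_append_Cons_cases)
    case (1 t')
    then show False using assms(4) twin by auto
  next
    case (2 U')
    obtain z where "z \<in> set t" using assms(2) by (cases t) auto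
    then have "z \<in> deps z" "deps z \<subseteq> deps a"
      using assms(3,4) dep_refl unfolding Dset_def by auto
    then have "(z, e) \<in> D"
      using twin sym_D unfolding Dset_def sym_def by blast
    then show False using UR(2) 2 \<open>z \<in> set t\<close> unfolding indep_words_def by auto
  qed
qed

text \<open>A twin \<open>e\<close> of \<open>a0\<close> depends on every descendant of the push, so it can only be read once
  they are all gone, which never happens in a shortest run.\<close>
lemma shortest_run_lower_push_hides_twins:
  assumes "shortest_run c ((p, a, v, q) # \<sigma>) d" "v \<noteq> []" "\<forall>z \<in> set v. deps z \<subset> deps a0"
    and "(p', e, w', q') \<in> set \<sigma>"
  shows "deps e \<noteq> deps a0"
proof -
  from assms(1) obtain c1 where "fires (p, a, v, q) c c1" "run c1 \<sigma> d"
    unfolding shortest_run_def run_Cons_iff by blast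
  then obtain x where x: "c = (p, tr D (a # x))" "c1 = (q, tr D (v @ x))" "x \<in> lists A"
    "(p, a, v, q) \<in> \<Delta>"
    unfolding fires_iff by blast
  obtain \<sigma>1 \<sigma>2 where \<sigma>: "\<sigma> = \<sigma>1 @ (p', e, w', q') # \<sigma>2"
    using split_list[OF assms(4)] by blast
  with \<open>run c1 \<sigma> d\<close> have "run c1 (\<sigma>1 @ (p', e, w', q') # \<sigma>2) d" by simp
  then obtain c2 c3 where "run c1 \<sigma>1 c2" "fires (p', e, w', q') c2 c3"
    unfolding run_append_iff run_Cons_iff by blast
  have v: "v \<in> lists A" using transition_letters[OF x(4)] by simp
  obtain q3 t r where tracked: "tracked_run q v x \<sigma>1 q3 t r" and c2: "c2 = (q3, tr D (t @ r))"
    using run_tracked_run[OF \<open>run c1 \<sigma>1 c2\<close>[unfolded x(2)] v x(3)] by blast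
  have "t \<noteq> []"
    using shortest_run_push_persists[OF _ assms(2) x(3) tracked] assms(1) x(1) \<sigma> by simp
  have "set t \<subseteq> {z. deps z \<subset> deps a0}"
  proof (rule tracked_run_letters[OF tracked])
    show "set v \<subseteq> {z. deps z \<subset> deps a0}" using assms(3) by blast
  qed (use deps_pushed_subset in blast)
  then have lower: "\<forall>z \<in> set t. deps z \<subset> deps a0" by blast
  have "t \<in> lists A" using tracked_run_lists[OF tracked v x(3)] by simp
  obtain y where "t @ r \<approx> e # y"
    using \<open>fires (p', e, w', q') c2 c3\<close> unfolding c2 by (elim firesE) auto
  from lower_prefix_blocks_twin[OF this \<open>t \<noteq> []\<close> \<open>t \<in> lists A\<close> lower] show ?thesis .
qed

text \<open>The semantic counterpart of (P2').\<close>
lemma fires_commute: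
  assumes "fires (p, a, v, q) c c1" "fires (q, b, w, r) c1 c2" "a # v \<parallel> [b]"
  obtains q' c1' where "fires (p, b, w, q') c c1'" "fires (q', a, v, r) c1' c2"
proof -
  from assms(1) obtain x where x: "c = (p, tr D (a # x))" "c1 = (q, tr D (v @ x))" "x \<in> lists A"
    "(p, a, v, q) \<in> \<Delta>"
    unfolding fires_iff by blast
  from assms(2) obtain x2 where x2: "(q, b, w, r) \<in> \<Delta>" "v @ x \<approx> b # x2" "c2 = (r, tr D (w @ x2))"
    unfolding x(2) by (elim firesE) auto
  have "v \<parallel> [b]" "(a, b) \<notin> D" using assms(3) unfolding indep_words_def by auto
  moreover have "(b, b) \<in> D" using dep_refl transition_letters[OF x2(1)] by blast
  ultimately obtain x' where x': "x \<approx> b # x'" "x2 \<approx> v @ x'"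
    using trace_eq_read_behind[OF x2(2)] by blast
  have "w \<parallel> a # v" using pushed_indep[OF x2(1) assms(3)] .
  then have "a # v \<parallel> w" using indep_sym by blast
  with assms(3) \<open>w \<parallel> a # v\<close> have "a # v \<parallel> b # w" "w \<parallel> [a]" "w \<parallel> v"
    unfolding indep_words_def by auto
  then obtain q' where q': "(p, b, w, q') \<in> \<Delta>" "(q', a, v, r) \<in> \<Delta>"
    using transitions_commute[OF x(4) x2(1)] by blast
  have lists: "a # x' \<in> lists A" "w @ x' \<in> lists A"
    using trace_eq_lists[OF x'(1) x(3)] transition_letters[OF x(4)] transition_letters[OF x2(1)]
    by auto
  have "a # x \<approx> a # b # x'"
    using trace_eq_append[OF trace_eq_refl x'(1), of "[a]"] by simp
  also have "a # b # x' \<approx> b # a # x'"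
    using trace_eq_swap[OF \<open>(a, b) \<notin> D\<close>, of "[]"] by simp
  finally have first: "fires (p, b, w, q') c (q', tr D (w @ a # x'))"
    using firesI[OF q'(1) lists(1), of "a # x" "w @ a # x'"] x(1) by simp
  have "w @ x2 \<approx> (w @ v) @ x'"
    using trace_eq_append[OF trace_eq_refl x'(2), of w] by simp
  also have "(w @ v) @ x' \<approx> (v @ w) @ x'"
    using trace_eq_append[OF indep_commute[OF \<open>w \<parallel> v\<close>] trace_eq_refl] .
  finally have "fires (q', a, v, r) (q', tr D (w @ a # x')) c2"
    using firesI[OF q'(2) lists(2), of "w @ a # x'" "w @ x2"] x2(3)
      trace_eq_move_front[OF \<open>w \<parallel> [a]\<close>]
    by simp
  with first show thesis by (rule that)
qed

lemma deps_pushed_psubset_of_indep: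
  assumes "(p, a, v, q) \<in> \<Delta>" "(a, b) \<in> D" "v \<parallel> [b]" "z \<in> set v"
  shows "deps z \<subset> deps a"
proof -
  have "b \<in> deps a" "b \<notin> deps z"
    using assms(2-4) unfolding indep_words_def Dset_def by auto
  with deps_pushed_subset[OF assms(1,4)] show ?thesis by blast
qed

lemma deps_pushed_psubset_of_read:
  assumes "(p, a, v, q) \<in> \<Delta>" "b \<in> set v" "deps b \<noteq> deps a" "(q', b, w, r) \<in> \<Delta>" "z \<in> set w"
  shows "deps z \<subset> deps a"
proof -
  have "deps b \<subset> deps a" using deps_pushed_subset[OF assms(1,2)] assms(3) by simp
  with deps_pushed_subset[OF assms(4,5)] show ?thesis by (rule subset_psubset_trans)
qed

lemma fires_read_pushed_cases:
  assumes "fires (p, a, U @ b # v, q) c c1" "fires (q, b, w, r) c1 c2" "U \<parallel> [b]"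
    and "w = [] \<or> deps b \<noteq> deps a"
  obtains (merge) "fires (p, a, U @ v, r) c c2"
  | (lower) "w \<noteq> []" "\<forall>z \<in> set w. deps z \<subset> deps a"
proof (cases "w = []")
  case True
  from assms(1) obtain x where x: "c = (p, tr D (a # x))" "c1 = (q, tr D ((U @ b # v) @ x))"
    "x \<in> lists A" "(p, a, U @ b # v, q) \<in> \<Delta>"
    unfolding fires_iff by blast
  from assms(2) obtain x2 where x2: "(q, b, w, r) \<in> \<Delta>" "(U @ b # v) @ x \<approx> b # x2"
    "c2 = (r, tr D (w @ x2))"
    unfolding x(2) by (elim firesE) auto
  have "U @ b # v @ x \<approx> b # x2" using x2(2) by simp
  with trace_eq_sym[OF trace_eq_move_front[OF assms(3)]] have "b # U @ v @ x \<approx> b # x2"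
    by (rule trace_eq_trans)
  then have "U @ v @ x \<approx> x2"
    using trace_eq_Cons_cancel dep_refl transition_letters[OF x2(1)] by blast
  moreover have "(p, a, U @ v, r) \<in> \<Delta>"
    using saturated_pop x(4) x2(1) assms(3) True by simp
  ultimately show thesis
    using merge firesI[OF _ x(3)] x(1) x2(3) True trace_eq_sym by simp
next
  case False
  have "(p, a, U @ b # v, q) \<in> \<Delta>" "(q, b, w, r) \<in> \<Delta>" "deps b \<noteq> deps a"
    using assms(1,2,4) False unfolding fires_def by simp_all
  then have "\<forall>z \<in> set w. deps z \<subset> deps a"
    using deps_pushed_psubset_of_read[of p a "U @ b # v" q b q w r] by simp
  with False show thesis by (rule lower)
qed

lemma fires_read_behind_cases:
  assumes "fires (p, a, v, q) c c1" "fires (q, b, w, r) c1 c2" "v \<parallel> [b]"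
  obtains (swap) q' c1' where "fires (p, b, w, q') c c1'" "fires (q', a, v, r) c1' c2"
  | (lower) "\<forall>z \<in> set v. deps z \<subset> deps a"
proof (cases "(a, b) \<in> D")
  case True
  have "(p, a, v, q) \<in> \<Delta>" using assms(1) unfolding fires_def by simp
  from deps_pushed_psubset_of_indep[OF this True assms(3)] show thesis
    using lower by blast
next
  case False
  then have "a # v \<parallel> [b]" using assms(3) unfolding indep_words_def by auto
  with assms(1,2) show thesis
    using fires_commute swap by blast
qed

lemma consecutive_steps_cases:
  assumes "fires (p, a, v, q) c c1" "fires (q', b, w, r) c1 c2" "w = [] \<or> deps b \<noteq> deps a"
  obtains (merge) \<tau> where "fires \<tau> c c2"
  | (swap) q'' c1' where "fires (p, b, w, q'') c c1'" "fires (q'', a, v, r) c1' c2"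
  | (lower_second) "w \<noteq> []" "\<forall>z \<in> set w. deps z \<subset> deps a"
  | (lower_first) "\<forall>z \<in> set v. deps z \<subset> deps a"
proof -
  from assms(1) obtain x where x: "c1 = (q, tr D (v @ x))"
    unfolding fires_iff by blast
  obtain x2 where x2: "q' = q" "v @ x \<approx> b # x2"
    using assms(2) unfolding x by (elim firesE) auto
  obtain U R where UR: "v @ x = U @ b # R" "U \<parallel> [b]"
    using trace_eq_Cons_split[OF trace_eq_sym[OF x2(2)]] by metis
  from UR(1) show thesis
  proof (cases rule: append_eq_append_Cons_cases)
    case (1 v')
    from assms(1,2)[unfolded 1(1) x2(1)] UR(2) assms(3) show thesis
      by (cases rule: fires_read_pushed_cases) (auto intro: merge lower_second)
  next
    case (2 U')
    then have "v \<parallel> [b]" using UR(2) unfolding indep_words_def by auto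
    with assms(1,2)[unfolded x2(1)] show thesis
      by (cases rule: fires_read_behind_cases) (auto intro: swap lower_first)
  qed
qed

end

section \<open>Normal form of shortest runs\<close>

text \<open>The kind sequences of the runs in \<open>VdashSeq A D \<Delta> Ts O (step A D (Delta_eps \<Delta>))\<^sup>*\<close>, where
  \<open>None\<close> is the kind of an \<open>\<epsilon>\<close>-step.\<close>
fun block_form :: "'b list \<Rightarrow> 'b option list \<Rightarrow> bool" where
  "block_form [] ks \<longleftrightarrow> set ks \<subseteq> {None}"
| "block_form (T # Ts) ks \<longleftrightarrow> (\<exists>ks0 ks1 ks2. ks = ks0 @ ks1 @ ks2 \<and> set ks0 \<subseteq> {None}
     \<and> ks1 \<noteq> [] \<and> set ks1 \<subseteq> {Some T} \<and> block_form Ts ks2)"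

lemma block_form_Cons_None: "block_form Ts ks \<Longrightarrow> block_form Ts (None # ks)"
proof (cases Ts)
  case (Cons T Ts')
  assume "block_form Ts ks"
  then obtain ks0 ks1 ks2 where "ks = ks0 @ ks1 @ ks2" "set ks0 \<subseteq> {None}" "ks1 \<noteq> []"
    "set ks1 \<subseteq> {Some T}" "block_form Ts' ks2"
    unfolding Cons block_form.simps(2) by blast
  then have "None # ks = (None # ks0) @ ks1 @ ks2 \<and> set (None # ks0) \<subseteq> {None} \<and> ks1 \<noteq> []
      \<and> set ks1 \<subseteq> {Some T} \<and> block_form Ts' ks2"
    by simp
  then show ?thesis
    unfolding Cons block_form.simps(2) by blast
qed simp

lemma block_form_Cons_Some: "block_form Ts ks \<Longrightarrow> block_form (T # Ts) (Some T # ks)"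
proof -
  assume "block_form Ts ks"
  then have "Some T # ks = [] @ [Some T] @ ks \<and> set [] \<subseteq> {None} \<and> [Some T] \<noteq> []
      \<and> set [Some T] \<subseteq> {Some T} \<and> block_form Ts ks"
    by simp
  then show ?thesis
    unfolding block_form.simps(2) by blast
qed

lemma block_form_set: "block_form Ts ks \<Longrightarrow> set Ts = {T. Some T \<in> set ks}"
proof (induction Ts arbitrary: ks)
  case Nil
  then show ?case by auto
next
  case (Cons T Ts)
  then obtain ks0 ks1 ks2 where "ks = ks0 @ ks1 @ ks2" "set ks0 \<subseteq> {None}" "set ks1 = {Some T}"
    "block_form Ts ks2"
    by (auto simp: subset_singleton_iff)
  with Cons.IH show ?case by auto
qed

lemma append_Cons_eq_first:
  "xs @ x # ys = xs' @ x # ys' \<Longrightarrow> x \<notin> set xs \<Longrightarrow> x \<notin> set xs' \<Longrightarrow> xs = xs' \<and> ys = ys'"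
  by (induction xs arbitrary: xs') (auto simp: Cons_eq_append_conv)

lemma block_form_duplicate:
  "block_form Ts (ks @ Some T # ks') \<Longrightarrow> Some T \<notin> set ks \<Longrightarrow> block_form Ts (ks @ Some T # Some T # ks')"
proof (induction Ts arbitrary: ks)
  case (Cons T' Ts)
  obtain ks0 ks1 ks2 where blocks: "ks @ Some T # ks' = ks0 @ ks1 @ ks2" "set ks0 \<subseteq> {None}"
    "ks1 \<noteq> []" "set ks1 \<subseteq> {Some T'}" "block_form Ts ks2"
    using Cons.prems(1) unfolding block_form.simps(2) by blast
  show ?case
  proof (cases "T = T'")
    case True
    then obtain ks1' where ks1: "ks1 = Some T # ks1'" using blocks(3,4) by (cases ks1) auto
    then have "ks = ks0" "ks' = ks1' @ ks2"
      using append_Cons_eq_first[of ks "Some T" ks' ks0 "ks1' @ ks2"] blocks(1,2) Cons.prems(2)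
      by auto
    then have "ks @ Some T # Some T # ks' = ks0 @ (Some T # ks1) @ ks2"
      using ks1 by simp
    moreover have "set (Some T # ks1) \<subseteq> {Some T'}" using blocks(4) True by simp
    ultimately show ?thesis
      using blocks(2,5) unfolding block_form.simps(2) by blast
  next
    case False
    from blocks(1) have "(ks0 @ ks1) @ ks2 = ks @ Some T # ks'" by simp
    then show ?thesis
    proof (cases rule: append_eq_append_Cons_cases)
      case (1 ks1')
      have "Some T \<in> set (ks0 @ ks1)" unfolding 1(1) by simp
      with blocks(2,4) False show ?thesis by auto
    next
      case (2 U)
      have "block_form Ts (U @ Some T # Some T # ks')"
        using Cons.IH blocks(5) Cons.prems(2) 2 by simp
      then have "ks @ Some T # Some T # ks' = ks0 @ ks1 @ (U @ Some T # Some T # ks')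
        \<and> set ks0 \<subseteq> {None} \<and> ks1 \<noteq> [] \<and> set ks1 \<subseteq> {Some T'}
        \<and> block_form Ts (U @ Some T # Some T # ks')"
        using 2 blocks(2-4) by simp
      then show ?thesis
        unfolding block_form.simps(2) by blast
    qed
  qed
qed simp

context trace_pushdown
begin

fun kind :: "('q, 'a) transition \<Rightarrow> 'a set option" where
  "kind (p, a, w, q) = (if w = [] then None else Some (twins A D a))"

lemma twins_eq_iff: "b \<in> A \<Longrightarrow> twins A D a = twins A D b \<longleftrightarrow> deps a = deps b"
  unfolding twins_def by blast

lemma kind_None_imp_Delta_eps: "\<tau> \<in> \<Delta> \<Longrightarrow> kind \<tau> = None \<Longrightarrow> \<tau> \<in> Delta_eps \<Delta>"
  by (cases \<tau>) (auto simp: Delta_eps_def split: if_splits)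

lemma kind_Some_imp_Delta_T: "\<tau> \<in> \<Delta> \<Longrightarrow> kind \<tau> = Some T \<Longrightarrow> \<tau> \<in> Delta_T \<Delta> T"
  by (cases \<tau>) (auto simp: Delta_T_def twins_def dest: transition_letters split: if_splits)

lemma kind_Some_twin_class: "\<tau> \<in> \<Delta> \<Longrightarrow> kind \<tau> = Some T \<Longrightarrow> T \<in> twin_classes A D"
  by (cases \<tau>) (auto simp: twin_classes_def dest: transition_letters split: if_splits)

lemma kind_twin_deps:
  "(p, e, w, q) \<in> \<Delta> \<Longrightarrow> kind (p, e, w, q) = Some (twins A D a) \<Longrightarrow> deps e = deps a"
  using twins_eq_iff transition_letters by (fastforce split: if_splits)

lemma kind_not_twin:
  "(p, b, w, q) \<in> \<Delta> \<Longrightarrow> kind (p, b, w, q) \<noteq> Some (twins A D a) \<Longrightarrow> w = [] \<or> deps b \<noteq> deps a"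
  using twins_eq_iff transition_letters by fastforce

lemma shortest_run_swap_first:
  assumes "shortest_run c ((p, a, v, q) # (q', b, w, r) # \<sigma>) d" "v \<noteq> []" "w = [] \<or> deps b \<noteq> deps a"
    and "(p', e, w', q'') \<in> set \<sigma>" "deps e = deps a"
  obtains q3 c1' where "fires (p, b, w, q3) c c1'" "shortest_run c1' ((q3, a, v, r) # \<sigma>) d"
proof -
  from assms(1) obtain c1 c2 where steps: "fires (p, a, v, q) c c1" "fires (q', b, w, r) c1 c2"
    "run c2 \<sigma> d"
    unfolding shortest_run_def run_Cons_iff by blast
  from steps(1,2) assms(3) show thesis
  proof (cases rule: consecutive_steps_cases)
    case (merge \<tau>)
    from merge steps(3) have "run c (\<tau> # \<sigma>) d" by (rule run_Cons)
    with assms(1) show thesis unfolding shortest_run_def by fastforce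
  next
    case (swap q3 c1')
    have "run c1' ((q3, a, v, r) # \<sigma>) d"
      using swap(2) steps(3) by (rule run_Cons)
    moreover have "run c [(p, b, w, q3)] c1'"
      using swap(1) run_single_iff by blast
    ultimately have "run c ([(p, b, w, q3)] @ (q3, a, v, r) # \<sigma>) d"
      using run_append_iff by blast
    then have "shortest_run c ([(p, b, w, q3)] @ (q3, a, v, r) # \<sigma>) d"
      by (rule shortest_run_same_length[OF assms(1)]) simp
    then have "shortest_run c1' ((q3, a, v, r) # \<sigma>) d"
      using \<open>run c [(p, b, w, q3)] c1'\<close> \<open>run c1' ((q3, a, v, r) # \<sigma>) d\<close>
      by (rule shortest_run_suffix)
    with swap(1) show thesis by (rule that)
  next
    case lower_second
    from assms(1) obtain c1' where
      "fires (p, a, v, q) c c1'" "shortest_run c1' ((q', b, w, r) # \<sigma>) d"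
      by (rule shortest_run_ConsE)
    from shortest_run_lower_push_hides_twins[OF this(2) lower_second assms(4)] assms(5)
    show thesis by simp
  next
    case lower_first
    have "(p', e, w', q'') \<in> set ((q', b, w, r) # \<sigma>)" using assms(4) by simp
    from shortest_run_lower_push_hides_twins[OF assms(1) assms(2) lower_first this] assms(5)
    show thesis by simp
  qed
qed

text \<open>The first step travels to the right, past the steps of other kinds, until it meets the
  first step of its own kind.\<close>
lemma shortest_run_gather:
  assumes "shortest_run c ((p, a, v, q) # \<sigma>) d" "v \<noteq> []"
    and "map kind \<sigma> = ks @ Some (twins A D a) # ks'" "Some (twins A D a) \<notin> set ks"
  shows "\<exists>\<sigma>'. run c \<sigma>' d \<and> map kind \<sigma>' = ks @ Some (twins A D a) # Some (twins A D a) # ks'"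
  using assms
proof (induction ks arbitrary: c p q \<sigma>)
  case Nil
  then have "run c ((p, a, v, q) # \<sigma>) d"
    "map kind ((p, a, v, q) # \<sigma>) = [] @ Some (twins A D a) # Some (twins A D a) # ks'"
    unfolding shortest_run_def by simp_all
  then show ?case by blast
next
  case (Cons k ks)
  obtain q' b w r \<sigma>1 where \<sigma>: "\<sigma> = (q', b, w, r) # \<sigma>1" "kind (q', b, w, r) = k"
    "map kind \<sigma>1 = ks @ Some (twins A D a) # ks'"
    using Cons.prems(3) by (cases \<sigma>) auto
  have run: "run c ((p, a, v, q) # (q', b, w, r) # \<sigma>1) d"
    using Cons.prems(1) \<sigma>(1) unfolding shortest_run_def by simp
  then have "set ((q', b, w, r) # \<sigma>1) \<subseteq> \<Delta>" using run_transitions[OF run] by simp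
  moreover have "kind (q', b, w, r) \<noteq> Some (twins A D a)"
    using Cons.prems(4) \<sigma>(2) by auto
  ultimately have "w = [] \<or> deps b \<noteq> deps a"
    using kind_not_twin[of q' b w r a] by simp
  have "Some (twins A D a) \<in> kind ` set \<sigma>1" using \<sigma>(3) by (metis in_set_conv_decomp set_map)
  then obtain p' e w' q'' where
    "(p', e, w', q'') \<in> set \<sigma>1" "kind (p', e, w', q'') = Some (twins A D a)"
    by (metis imageE prod_cases4)
  then have "deps e = deps a"
    using kind_twin_deps \<open>set ((q', b, w, r) # \<sigma>1) \<subseteq> \<Delta>\<close> by auto
  then obtain q3 c1' where "fires (p, b, w, q3) c c1'" "shortest_run c1' ((q3, a, v, r) # \<sigma>1) d"
    using shortest_run_swap_first Cons.prems(1,2) \<sigma>(1) \<open>w = [] \<or> deps b \<noteq> deps a\<close>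
      \<open>(p', e, w', q'') \<in> set \<sigma>1\<close> by blast
  moreover obtain \<sigma>' where "run c1' \<sigma>' d"
    "map kind \<sigma>' = ks @ Some (twins A D a) # Some (twins A D a) # ks'"
    using Cons.IH[OF calculation(2) Cons.prems(2) \<sigma>(3)] Cons.prems(4) by auto
  ultimately have "run c ((p, b, w, q3) # \<sigma>') d"
    "map kind ((p, b, w, q3) # \<sigma>') = (k # ks) @ Some (twins A D a) # Some (twins A D a) # ks'"
    using \<sigma>(2) by (auto intro: run_Cons)
  then show ?case by blast
qed

lemma shortest_run_join_block:
  assumes "shortest_run c ((p, a, v, q) # \<sigma>s) d" "v \<noteq> []" "block_form Ts (map kind \<sigma>s)"
    and "twins A D a \<in> set Ts"
  obtains \<sigma>' where "run c \<sigma>' d" "length \<sigma>' = Suc (length \<sigma>s)" "block_form Ts (map kind \<sigma>')"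
proof -
  have "Some (twins A D a) \<in> set (map kind \<sigma>s)"
    using block_form_set[OF assms(3)] assms(4) by blast
  then obtain ks ks' where ks: "map kind \<sigma>s = ks @ Some (twins A D a) # ks'"
    "Some (twins A D a) \<notin> set ks"
    using split_list_first by metis
  then obtain \<sigma>' where \<sigma>': "run c \<sigma>' d"
    "map kind \<sigma>' = ks @ Some (twins A D a) # Some (twins A D a) # ks'"
    using shortest_run_gather[OF assms(1,2)] by blast
  moreover have "length \<sigma>' = Suc (length \<sigma>s)"
    using arg_cong[OF \<sigma>'(2), of length] arg_cong[OF ks(1), of length] by simp
  moreover have "block_form Ts (map kind \<sigma>')"
    using block_form_duplicate assms(3) ks \<sigma>'(2) by simp
  ultimately show thesis using that by blast
qed

lemma shortest_run_Cons_block_form: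
  assumes "shortest_run c (f # \<sigma>s) d" "block_form Ts (map kind \<sigma>s)" "distinct Ts"
  shows "\<exists>\<sigma>s' Ts'. run c \<sigma>s' d \<and> length \<sigma>s' = Suc (length \<sigma>s) \<and> block_form Ts' (map kind \<sigma>s')
    \<and> distinct Ts'"
proof -
  have run: "run c (f # \<sigma>s) d" "length (f # \<sigma>s) = Suc (length \<sigma>s)"
    using assms(1) unfolding shortest_run_def by simp_all
  obtain p a v q where f: "f = (p, a, v, q)" by (cases f)
  show ?thesis
  proof (cases "v = []")
    case True
    then have "block_form Ts (map kind (f # \<sigma>s))"
      using block_form_Cons_None[OF assms(2)] f by simp
    with run assms(3) show ?thesis by blast
  next
    case False
    show ?thesis
    proof (cases "twins A D a \<in> set Ts")
      case True
      obtain \<sigma>' where "run c \<sigma>' d" "length \<sigma>' = Suc (length \<sigma>s)" "block_form Ts (map kind \<sigma>')"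
        using shortest_run_join_block[OF assms(1)[unfolded f] False assms(2) True] .
      with assms(3) show ?thesis by blast
    next
      case notin: False
      have "block_form (twins A D a # Ts) (map kind (f # \<sigma>s))" "distinct (twins A D a # Ts)"
        using block_form_Cons_Some[OF assms(2)] f False notin assms(3) by simp_all
      with run show ?thesis by blast
    qed
  qed
qed

lemma shortest_run_block_form:
  "shortest_run c \<tau>s d
   \<Longrightarrow> \<exists>\<sigma>s Ts. run c \<sigma>s d \<and> length \<sigma>s = length \<tau>s \<and> block_form Ts (map kind \<sigma>s) \<and> distinct Ts"
proof (induction \<tau>s arbitrary: c)
  case Nil
  then have "run c [] d" "length [] = length ([] :: ('q, 'a) transition list)"
    "block_form [] (map kind [])" "distinct ([] :: 'a set list)"
    unfolding shortest_run_def by simp_all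
  then show ?case by blast
next
  case (Cons f \<tau>s)
  from Cons.prems obtain c1 where "fires f c c1" "shortest_run c1 \<tau>s d"
    by (rule shortest_run_ConsE)
  with Cons.IH obtain \<sigma>s Ts where IH: "run c1 \<sigma>s d" "length \<sigma>s = length \<tau>s"
    "block_form Ts (map kind \<sigma>s)" "distinct Ts"
    by blast
  from \<open>fires f c c1\<close> IH(1) have "run c (f # \<sigma>s) d" by (rule run_Cons)
  then have "shortest_run c (f # \<sigma>s) d"
    using shortest_run_same_length[OF Cons.prems] IH(2) by simp
  from shortest_run_Cons_block_form[OF this IH(3,4)] IH(2) show ?case by simp
qed

lemma run_eps_kinds_rtrancl:
  assumes "run c \<tau>s d" "set (map kind \<tau>s) \<subseteq> {None}"
  shows "(c, d) \<in> (step A D (Delta_eps \<Delta>))\<^sup>*"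
proof (rule run_imp_rtrancl_step[OF assms(1)])
  show "set \<tau>s \<subseteq> Delta_eps \<Delta>"
  proof
    fix \<tau> assume "\<tau> \<in> set \<tau>s"
    then have "\<tau> \<in> \<Delta>" "kind \<tau> = None"
      using assms(2) run_transitions[OF assms(1)] by auto
    then show "\<tau> \<in> Delta_eps \<Delta>" by (rule kind_None_imp_Delta_eps)
  qed
qed

lemma run_twin_kinds_trancl:
  assumes "run c \<tau>s d" "\<tau>s \<noteq> []" "set (map kind \<tau>s) \<subseteq> {Some T}"
  shows "(c, d) \<in> (step A D (Delta_T \<Delta> T))\<^sup>+"
proof (rule run_imp_trancl_step[OF assms(1,2)])
  show "set \<tau>s \<subseteq> Delta_T \<Delta> T"
  proof
    fix \<tau> assume "\<tau> \<in> set \<tau>s"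
    then have "\<tau> \<in> \<Delta>" "kind \<tau> = Some T"
      using assms(3) run_transitions[OF assms(1)] by auto
    then show "\<tau> \<in> Delta_T \<Delta> T" by (rule kind_Some_imp_Delta_T)
  qed
qed

lemma block_form_run_VdashSeq:
  "block_form Ts (map kind \<tau>s) \<Longrightarrow> run c \<tau>s d
   \<Longrightarrow> (c, d) \<in> VdashSeq A D \<Delta> Ts O (step A D (Delta_eps \<Delta>))\<^sup>*"
proof (induction Ts arbitrary: c \<tau>s)
  case Nil
  then show ?case using run_eps_kinds_rtrancl by simp
next
  case (Cons T Ts)
  obtain ks0 ks1 ks2 where ks: "map kind \<tau>s = ks0 @ ks1 @ ks2" "set ks0 \<subseteq> {None}"
    "ks1 \<noteq> []" "set ks1 \<subseteq> {Some T}" "block_form Ts ks2"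
    using Cons.prems(1) unfolding block_form.simps(2) by blast
  obtain \<tau>s0 \<tau>s12 where "\<tau>s = \<tau>s0 @ \<tau>s12" "map kind \<tau>s0 = ks0" "map kind \<tau>s12 = ks1 @ ks2"
    using map_eq_append_conv[THEN iffD1, OF ks(1)] by auto
  moreover obtain \<tau>s1 \<tau>s2 where "\<tau>s12 = \<tau>s1 @ \<tau>s2" "map kind \<tau>s1 = ks1" "map kind \<tau>s2 = ks2"
    using map_eq_append_conv[THEN iffD1, OF \<open>map kind \<tau>s12 = ks1 @ ks2\<close>] by auto
  ultimately have \<tau>s: "\<tau>s = \<tau>s0 @ \<tau>s1 @ \<tau>s2" "map kind \<tau>s0 = ks0"
    "map kind \<tau>s1 = ks1" "map kind \<tau>s2 = ks2"
    by simp_all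
  from Cons.prems(2) obtain c1 c2 where runs: "run c \<tau>s0 c1" "run c1 \<tau>s1 c2" "run c2 \<tau>s2 d"
    unfolding \<tau>s run_append_iff by blast
  have "(c, c1) \<in> (step A D (Delta_eps \<Delta>))\<^sup>*"
    using run_eps_kinds_rtrancl[OF runs(1)] \<tau>s(2) ks(2) by simp
  moreover have "(c1, c2) \<in> (step A D (Delta_T \<Delta> T))\<^sup>+"
    using run_twin_kinds_trancl[OF runs(2)] \<tau>s(3) ks(3,4) by auto
  ultimately have "(c, c2) \<in> VdashT A D \<Delta> T"
    unfolding VdashT_def by blast
  moreover have "(c2, d) \<in> VdashSeq A D \<Delta> Ts O (step A D (Delta_eps \<Delta>))\<^sup>*"
    using Cons.IH ks(5) \<tau>s(4) runs(3) by blast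
  ultimately show ?case by auto
qed

end

theorem proposition5p11:
  fixes A :: "'a set" and D :: "('a \<times> 'a) set"
    and Q :: "'q set" and \<Delta> :: "('q \<times> 'a \<times> 'a list \<times> 'q) set"
    and c d :: "'q \<times> 'a list set"
  assumes "dep_alphabet A D"
    and "trace_pds A D Q \<Delta>"
    and "saturated A D \<Delta>"
    and "c \<in> Q \<times> traces A D" and "d \<in> Q \<times> traces A D"
    and "(c, d) \<in> (step A D \<Delta>)\<^sup>*"
  shows "\<exists>Ts. length Ts \<le> TI A D \<and> set Ts \<subseteq> twin_classes A D
           \<and> (c, d) \<in> VdashSeq A D \<Delta> Ts O (step A D (Delta_eps \<Delta>))\<^sup>*"
proof -
  interpret trace_pushdown A D Q \<Delta>
    using assms(1-3) by unfold_locales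
  obtain \<tau>s where "run c \<tau>s d"
    using rtrancl_step_imp_run[OF assms(6)] by blast
  then obtain \<tau>s' where "shortest_run c \<tau>s' d"
    using shortest_run_exists by blast
  then obtain \<sigma>s Ts where normal: "run c \<sigma>s d" "block_form Ts (map kind \<sigma>s)" "distinct Ts"
    using shortest_run_block_form by blast
  have "set Ts \<subseteq> twin_classes A D"
    using block_form_set[OF normal(2)] run_transitions[OF normal(1)] kind_Some_twin_class by auto
  moreover have "finite (twin_classes A D)"
    using assms(1) unfolding dep_alphabet_def twin_classes_def by simp
  ultimately have "length Ts \<le> TI A D"
    unfolding TI_def using distinct_card[OF normal(3)] card_mono by metis
  with \<open>set Ts \<subseteq> twin_classes A D\<close> show ?thesis
    using block_form_run_VdashSeq[OF normal(2,1)] by blast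
qed

end
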